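(* Let $F_j$ denote the ordinary Fibonacci numbers ($F_1=F_2=1$, $F_{j+1}=F_j+F_{j-1}$). For integers $m\ge1$ and $N\ge1$ let $$S_m(N)=\sum_{\substack{j_1,\dots,j_m\ge1\\ j_1+\cdots+j_m=N}}F_{j_1}F_{j_2}\cdots F_{j_m}.$$ Then for all integers $m\ge1$, $n\ge0$, $$S_m(n+m)=(-i)^nC_n^{m}(i/2)=\frac{(2m)_n}{2^n}\sum_{r=0}^{\lfloor n/2\rfloor}\frac{(5/4)^r}{r!\,(m+1/2)_r\,(n-2r)!}.$$ *)

theory Defs
  imports Complex_Main "HOL-Number_Theory.Fib"
begin

definition fib_conv_sum :: "nat \<Rightarrow> nat \<Rightarrow> nat" where
  "fib_conv_sum m N =
     (\<Sum>js\<in>{js :: nat list. length js = m \<and> (\<forall>j\<in>set js. 1 \<le> j) \<and> sum_list js = N}.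
        prod_list (map fib js))"

definition gegenbauer :: "nat \<Rightarrow> complex \<Rightarrow> complex \<Rightarrow> complex" where
  "gegenbauer n lam x =
     (\<Sum>k=0..n div 2. (-1)^k * pochhammer lam (n - k)
        / (fact k * fact (n - 2*k)) * (2*x)^(n - 2*k))"

end

theory Submission
  imports Defs "HOL-Computational_Algebra.Formal_Power_Series"
begin

(* Since x/(1 - x - x^2) generates the Fibonacci numbers, S_m(n + m) is the coefficient of x^n in
   (1 - x - x^2)^(-m).  The substitution z = -i x turns 1 - x - x^2 into the Gegenbauer denominator
   1 - 2tz + z^2 at t = i/2, whose (-m)-th power generates C_n^m(t); expanding it binomially in
   z^2 - 2tz gives the defining formula of C_n^m.  For the second formula, complete the square,
   1 - 2tz + z^2 = (1 - tz)^2 (1 - (t^2 - 1) z^2 / (1 - tz)^2), expand binomially in the second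
   factor, and merge the Pochhammer symbols with the duplication formula
   (2a)_(2r) = 4^r (a)_r (a + 1/2)_r. *)

unbundle fps_syntax

definition compositions :: "nat \<Rightarrow> nat \<Rightarrow> nat list set" where
  "compositions m N =
     {js. length js = m \<and> (\<forall>j\<in>set js. 1 \<le> j) \<and> sum_list js = N}"

lemma finite_compositions: "finite (compositions m N)"
proof (rule finite_subset)
  show "compositions m N \<subseteq> {js. set js \<subseteq> {0..N} \<and> length js = m}"
    unfolding compositions_def using member_le_sum_list[where 'a=nat] by fastforce
qed (rule finite_lists_length_eq, simp)

lemma compositions_0: "compositions 0 N = (if N = 0 then {[]} else {})"
  unfolding compositions_def by auto

lemma compositions_Suc:
  "compositions (Suc m) N = (\<lambda>(j, js). j # js) ` (SIGMA j:{1..N}. compositions m (N - j))"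
proof (intro set_eqI iffI)
  fix xs assume "xs \<in> compositions (Suc m) N"
  then obtain j js where "xs = j # js" "length js = m" "1 \<le> j" "\<forall>j\<in>set js. 1 \<le> j"
      "j + sum_list js = N"
    unfolding compositions_def by (cases xs) auto
  then show "xs \<in> (\<lambda>(j, js). j # js) ` (SIGMA j:{1..N}. compositions m (N - j))"
    unfolding compositions_def by (auto intro!: image_eqI[where x="(j, js)"])
qed (auto simp: compositions_def)

lemma sum_compositions_eq_fps_power_nth:
  fixes f :: "nat \<Rightarrow> 'a :: comm_semiring_1"
  assumes "f 0 = 0"
  shows "(\<Sum>js\<in>compositions m N. prod_list (map f js)) = (Abs_fps f ^ m) $ N"
proof (induction m arbitrary: N)
  case 0
  then show ?case by (simp add: compositions_0)
next
  case (Suc m)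
  have "inj_on (\<lambda>(j, js). j # js) X" for X :: "(nat \<times> nat list) set"
    by (auto simp: inj_on_def)
  then have "(\<Sum>js\<in>compositions (Suc m) N. prod_list (map f js))
      = (\<Sum>j=1..N. \<Sum>js\<in>compositions m (N - j). f j * prod_list (map f js))"
    by (simp add: compositions_Suc sum.reindex sum.Sigma finite_compositions split_def)
  also have "\<dots> = (\<Sum>j=0..N. f j * (Abs_fps f ^ m) $ (N - j))"
    by (simp add: Suc.IH sum.atLeast_Suc_atMost assms flip: sum_distrib_left)
  finally show ?case by (simp add: fps_mult_nth)
qed

definition fps_fib :: "'a :: comm_semiring_1 fps" where
  "fps_fib = Abs_fps (\<lambda>j. of_nat (fib j))"

lemma fib_conv_sum_eq_fps_fib_power_nth:
  "of_nat (fib_conv_sum m N) = (fps_fib ^ m :: 'a :: comm_semiring_1 fps) $ N"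
proof -
  have "of_nat (prod_list (map fib js)) = prod_list (map (\<lambda>j. of_nat (fib j) :: 'a) js)" for js
    by (induction js) simp_all
  then have "of_nat (fib_conv_sum m N)
      = (\<Sum>js\<in>compositions m N. prod_list (map (\<lambda>j. of_nat (fib j) :: 'a) js))"
    by (simp add: fib_conv_sum_def compositions_def)
  also have "\<dots> = (fps_fib ^ m) $ N"
    unfolding fps_fib_def by (rule sum_compositions_eq_fps_power_nth) simp
  finally show ?thesis .
qed

lemma fps_fib_times_denominator:
  "fps_fib * (1 - fps_X - fps_X^2) = (fps_X :: 'a :: comm_ring_1 fps)"
proof (rule fps_ext)
  fix n
  have "fps_fib * (1 - fps_X - fps_X^2)
      = fps_fib - fps_X * fps_fib - fps_X * (fps_X * fps_fib :: 'a fps)"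
    by (simp add: algebra_simps power2_eq_square)
  then show "(fps_fib * (1 - fps_X - fps_X^2)) $ n = (fps_X :: 'a fps) $ n"
    by (cases n rule: fib.cases) (auto simp: fps_fib_def)
qed

lemma fps_fib_power_nth:
  "(fps_fib ^ m :: 'a :: field fps) $ (n + m) = inverse ((1 - fps_X - fps_X^2) ^ m) $ n"
proof -
  let ?P = "1 - fps_X - fps_X^2 :: 'a fps"
  have "?P ^ m * inverse (?P ^ m) = 1"
    by (rule inverse_mult_eq_1') (simp add: fps_nth_power_0)
  then have "fps_fib ^ m = fps_fib ^ m * ?P ^ m * inverse (?P ^ m)"
    by (simp add: mult.assoc)
  also have "\<dots> = fps_X ^ m * inverse (?P ^ m)"
    by (simp add: fps_fib_times_denominator flip: power_mult_distrib)
  finally show ?thesis by (simp add: fps_X_power_mult_nth)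
qed

lemma inverse_power_eq_fps_binomial_compose:
  fixes b :: "'a :: field_char_0 fps"
  assumes "b $ 0 = 0"
  shows "inverse ((1 + b) ^ m) = fps_binomial (- of_nat m) oo b"
proof -
  have "(1 + fps_X) ^ m oo b = (1 + b) ^ m"
    using assms
    by (simp add: fps_compose_power[symmetric] fps_compose_add_distrib fps_X_fps_compose_startby0)
  then show ?thesis
    using assms by (simp add: fps_binomial_minus_of_nat fps_inverse_compose fps_nth_power_0)
qed

lemma fps_compose_mult_nth:
  fixes a b c :: "'a :: comm_ring_1 fps"
  assumes "b $ 0 = 0"
  shows "((a oo b) * c) $ n = (\<Sum>i=0..n. a $ i * (b ^ i * c) $ n)"
proof -
  have compose_nth: "(a oo b) $ j = (\<Sum>i=0..n. a $ i * (b ^ i) $ j)" if "j \<le> n" for j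
    unfolding fps_compose_nth
    by (rule sum.mono_neutral_left) (use that startsby_zero_power_prefix[OF assms] in auto)
  have "((a oo b) * c) $ n = (\<Sum>j=0..n. \<Sum>i=0..n. a $ i * ((b ^ i) $ j * c $ (n - j)))"
    by (simp add: fps_mult_nth compose_nth sum_distrib_right mult.assoc)
  also have "\<dots> = (\<Sum>i=0..n. a $ i * (b ^ i * c) $ n)"
    by (subst sum.swap) (simp only: fps_mult_nth sum_distrib_left)
  finally show ?thesis .
qed

lemma fps_X_plus_const_power_nth:
  "((fps_X + fps_const c) ^ i) $ j = of_nat (i choose j) * (c :: 'a :: comm_ring_1) ^ (i - j)"
  by (simp add: binomial_ring fps_sum_nth fps_X_power_mult_nth mult_delta_left mult_delta_right
      binomial_eq_0)

lemma inverse_one_minus_const_X_power_nth: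
  "inverse ((1 - fps_const c * fps_X) ^ a) $ j
     = c ^ j * pochhammer (of_nat a) j / (fact j :: 'a :: field_char_0)"
proof -
  have "- fps_const c * fps_X = fps_const (- c) * fps_X" by simp
  then have "inverse ((1 - fps_const c * fps_X) ^ a) $ j = (- c) ^ j * (- of_nat a gchoose j)"
    by (simp only: one_minus_fps_X_const_neg_power fps_nth_compose_linear fps_binomial_nth)
  also have "\<dots> = c ^ j * pochhammer (of_nat a) j / fact j"
    by (simp add: gbinomial_pochhammer power_minus[of c] field_simps flip: power_add)
  finally show ?thesis .
qed

lemma sum_choose_reflect_half:
  fixes a :: "nat \<Rightarrow> 'a :: comm_semiring_1"
  shows "(\<Sum>i=0..n. of_nat (i choose (n - i)) * a i)
       = (\<Sum>k=0..n div 2. of_nat ((n - k) choose k) * a (n - k))"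
proof -
  have "(\<Sum>i=0..n. of_nat (i choose (n - i)) * a i)
      = (\<Sum>k=0..n. of_nat ((n - k) choose k) * a (n - k))"
    by (subst sum.atLeastAtMost_rev) (auto intro!: sum.cong)
  also have "\<dots> = (\<Sum>k=0..n div 2. of_nat ((n - k) choose k) * a (n - k))"
    by (rule sum.mono_neutral_right) (auto simp: binomial_eq_0)
  finally show ?thesis .
qed

lemma choose_gchoose_eq_gegenbauer_term:
  assumes "2 * k \<le> n"
  shows "of_nat ((n - k) choose k) * ((- of_nat m gchoose (n - k)) * (- 2 * t) ^ (2 * (n - k) - n))
       = (-1)^k * pochhammer (of_nat m) (n - k) / (fact k * fact (n - 2*k))
           * (2 * t :: complex) ^ (n - 2*k)"
proof -
  obtain j where n: "n = 2 * k + j" using assms le_Suc_ex by blast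
  have choose: "of_nat ((k + j) choose k) = (fact (k + j) / (fact k * fact j) :: complex)"
    using binomial_fact[of k "k + j"] by simp
  have "(- 2 * t) ^ j = (-1) ^ j * (2 * t) ^ j"
    using power_minus[of "2 * t" j] by simp
  moreover have "(-1 :: complex) ^ j * (-1) ^ j = 1"
    by (simp flip: power_add)
  ultimately have sign: "(-1) ^ (k + j) * (- 2 * t) ^ j = (-1) ^ k * (2 * t :: complex) ^ j"
    by (simp add: power_add algebra_simps)
  have "of_nat ((n - k) choose k) * ((- of_nat m gchoose (n - k)) * (- 2 * t) ^ (2 * (n - k) - n))
      = of_nat ((k + j) choose k) * (pochhammer (of_nat m) (k + j) / fact (k + j))
          * ((-1) ^ (k + j) * (- 2 * t) ^ j)"
    by (simp add: n gbinomial_pochhammer algebra_simps)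
  also have "\<dots> = (-1)^k * pochhammer (of_nat m) (k + j) / (fact k * fact j) * (2 * t) ^ j"
    unfolding sign choose by simp
  finally show ?thesis by (simp add: n)
qed

lemma gegenbauer_generating_function:
  "inverse ((1 - fps_const (2 * t) * fps_X + fps_X^2) ^ m) $ n = gegenbauer n (of_nat m) t"
proof -
  define b :: "complex fps" where "b = fps_X * (fps_X + fps_const (- 2 * t))"
  have b0: "b $ 0 = 0" by (simp add: b_def)
  have b_power_nth: "(b ^ i) $ n = (- 2 * t) ^ (2 * i - n) * of_nat (i choose (n - i))"
    if "i \<le> n" for i
  proof -
    have "i - (n - i) = 2 * i - n" using that by simp
    with that show ?thesis
      by (simp add: b_def power_mult_distrib fps_X_power_mult_nth fps_X_plus_const_power_nth)
  qed
  have denominator: "1 - fps_const (2 * t) * fps_X + fps_X^2 = 1 + b"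
    by (simp add: b_def algebra_simps power2_eq_square fps_const_neg[symmetric] del: fps_const_neg)
  have "inverse ((1 - fps_const (2 * t) * fps_X + fps_X^2) ^ m) $ n
      = (\<Sum>i=0..n. (- of_nat m gchoose i) * (b ^ i) $ n)"
    unfolding denominator inverse_power_eq_fps_binomial_compose[OF b0] fps_compose_nth
      fps_binomial_nth ..
  also have "\<dots> = (\<Sum>i=0..n. of_nat (i choose (n - i))
      * ((- of_nat m gchoose i) * (- 2 * t) ^ (2 * i - n)))"
    by (intro sum.cong) (simp_all add: b_power_nth)
  also have "\<dots> = gegenbauer n (of_nat m) t"
    unfolding sum_choose_reflect_half gegenbauer_def
    by (rule sum.cong[OF refl], rule choose_gchoose_eq_gegenbauer_term) auto
  finally show ?thesis .
qed

lemma fps_completed_square: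
  fixes t :: "'a :: field_char_0"
  shows "(1 - fps_const t * fps_X)^2 + fps_const (1 - t^2) * fps_X^2
       = 1 - fps_const (2 * t) * fps_X + fps_X^2"
proof -
  have const_square: "fps_const (1 - t^2) = 1 - fps_const t ^ 2"
    by (metis fps_const_1_eq_1 fps_const_power fps_const_sub)
  have const_double: "fps_const (2 * t) = 2 * fps_const t"
    by (simp add: numeral_fps_const)
  show ?thesis
    unfolding const_square const_double
    by (simp add: power2_eq_square algebra_simps del: fps_const_mult fps_const_power)
qed

lemma inverse_power_completed_square:
  fixes t :: "'a :: field_char_0"
  defines "D \<equiv> 1 - fps_const t * fps_X"
  shows "inverse ((1 - fps_const (2 * t) * fps_X + fps_X^2) ^ m)
       = (fps_binomial (- of_nat m) oo (fps_const (1 - t^2) * fps_X^2 * inverse (D^2)))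
           * inverse (D ^ (2*m))"
proof -
  define V where "V = fps_const (1 - t^2) * fps_X^2 * inverse (D^2)"
  have V0: "V $ 0 = 0" by (simp add: V_def)
  have "D^2 * inverse (D^2) = 1"
    by (rule inverse_mult_eq_1') (simp add: D_def fps_nth_power_0)
  then have "D^2 * (1 + V) = D^2 + fps_const (1 - t^2) * fps_X^2"
    by (simp add: V_def algebra_simps)
  also have "\<dots> = 1 - fps_const (2 * t) * fps_X + fps_X^2"
    unfolding D_def by (rule fps_completed_square)
  finally have square: "D^2 * (1 + V) = 1 - fps_const (2 * t) * fps_X + fps_X^2" .
  have "(1 - fps_const (2 * t) * fps_X + fps_X^2) ^ m = (1 + V) ^ m * D ^ (2*m)"
    unfolding square[symmetric] power_mult_distrib power_mult[of D 2 m] by (rule mult.commute)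
  then show ?thesis
    by (simp add: fps_inverse_mult inverse_power_eq_fps_binomial_compose[OF V0] flip: V_def)
qed

lemma gegenbauer_generating_function_completed_square:
  fixes t :: "'a :: field_char_0"
  shows "inverse ((1 - fps_const (2 * t) * fps_X + fps_X^2) ^ m) $ n
       = (\<Sum>i=0..n div 2. (- of_nat m gchoose i) * (1 - t^2) ^ i
            * (t ^ (n - 2*i) * pochhammer (of_nat (2*m + 2*i)) (n - 2*i) / fact (n - 2*i)))"
proof -
  define D :: "'a fps" where "D = 1 - fps_const t * fps_X"
  define V where "V = fps_const (1 - t^2) * fps_X^2 * inverse (D^2)"
  have V0: "V $ 0 = 0" by (simp add: V_def)
  have V_power: "V ^ i * inverse (D ^ (2*m))
      = fps_const ((1 - t^2) ^ i) * (fps_X ^ (2*i) * inverse (D ^ (2*m + 2*i)))" for i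
  proof -
    have "inverse (D^2) ^ i * inverse (D ^ (2*m)) = inverse (D ^ (2*m + 2*i))"
      by (simp only: fps_inverse_power[symmetric] power_mult[symmetric] fps_inverse_mult[symmetric]
          power_add[symmetric] add.commute)
    then show ?thesis
      unfolding V_def power_mult_distrib fps_const_power power_mult[symmetric] mult.assoc by simp
  qed
  have "inverse ((1 - fps_const (2 * t) * fps_X + fps_X^2) ^ m) $ n
      = (\<Sum>i=0..n. (- of_nat m gchoose i) * (V ^ i * inverse (D ^ (2*m))) $ n)"
    unfolding inverse_power_completed_square D_def[symmetric] V_def[symmetric]
    by (simp add: fps_compose_mult_nth[OF V0])
  also have "\<dots> = (\<Sum>i=0..n. (- of_nat m gchoose i) * (1 - t^2) ^ i
      * (if n < 2*i then 0 else inverse (D ^ (2*m + 2*i)) $ (n - 2*i)))"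
    by (simp add: V_power fps_X_power_mult_nth mult.assoc)
  also have "\<dots> = (\<Sum>i=0..n div 2. (- of_nat m gchoose i) * (1 - t^2) ^ i
      * (t ^ (n - 2*i) * pochhammer (of_nat (2*m + 2*i)) (n - 2*i) / fact (n - 2*i)))"
    by (rule sum.mono_neutral_cong_right) (auto simp: D_def inverse_one_minus_const_X_power_nth)
  finally show ?thesis .
qed

lemma pochhammer_double_split:
  fixes z :: "'a :: field_char_0"
  assumes "2 * r \<le> n"
  shows "pochhammer (2 * z) n
       = 4 ^ r * pochhammer z r * pochhammer (z + 1/2) r
           * pochhammer (2 * z + of_nat (2 * r)) (n - 2 * r)"
proof -
  have "pochhammer (2 * z) n
      = pochhammer (2 * z) (2 * r) * pochhammer (2 * z + of_nat (2 * r)) (n - 2 * r)"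
    using assms pochhammer_product'[of "2 * z" "2 * r" "n - 2 * r"] by simp
  then show ?thesis
    by (simp add: pochhammer_double power_mult)
qed

lemma pochhammer_of_nat_plus_half_neq_0: "pochhammer (of_nat m + 1/2 :: complex) r \<noteq> 0"
proof
  assume "pochhammer (of_nat m + 1/2 :: complex) r = 0"
  then obtain k where "(of_nat m + 1/2 :: complex) = - of_nat k"
    by (auto simp: pochhammer_eq_0_iff)
  then have "Re (of_nat m + 1/2 :: complex) = Re (- of_nat k)"
    by simp
  then have "real m + 1/2 = - real k"
    by simp
  then show False by linarith
qed

lemma gchoose_pochhammer_eq_completed_square_term:
  fixes t :: complex
  assumes "2 * r \<le> n"
  shows "(- of_nat m gchoose r) * (1 - t^2) ^ r
           * (t ^ (n - 2*r) * pochhammer (of_nat (2*m + 2*r)) (n - 2*r) / fact (n - 2*r))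
       = pochhammer (2 * of_nat m) n * (((t^2 - 1) / 4) ^ r * t ^ (n - 2*r)
           / (fact r * pochhammer (of_nat m + 1/2) r * fact (n - 2*r)))"
proof -
  have "(-1) ^ r * (1 - t^2) ^ r = (t^2 - 1) ^ r"
    by (simp flip: power_mult_distrib)
  also have "\<dots> = (4 * ((t^2 - 1) / 4)) ^ r"
    by (metis nonzero_mult_div_cancel_left times_divide_eq_right zero_neq_numeral)
  also have "\<dots> = 4 ^ r * ((t^2 - 1) / 4) ^ r"
    by (rule power_mult_distrib)
  finally have sign: "(-1) ^ r * (1 - t^2) ^ r = 4 ^ r * ((t^2 - 1) / 4) ^ r" .
  have binom: "(- of_nat m gchoose r) * (1 - t^2) ^ r
      = 4 ^ r * pochhammer (of_nat m) r / fact r * ((t^2 - 1) / 4) ^ r"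
    by (simp add: gbinomial_pochhammer sign[symmetric])
  have "pochhammer (2 * of_nat m :: complex) n
      = 4 ^ r * pochhammer (of_nat m) r * pochhammer (of_nat m + 1/2) r
          * pochhammer (of_nat (2*m + 2*r)) (n - 2*r)"
    using pochhammer_double_split[OF assms, of "of_nat m :: complex"] by simp
  then show ?thesis
    unfolding binom using pochhammer_of_nat_plus_half_neq_0[of m r] by (simp add: field_simps)
qed

lemma gegenbauer_of_nat_eq_sum_pochhammer:
  "gegenbauer n (of_nat m) t = pochhammer (2 * of_nat m) n *
     (\<Sum>r=0..n div 2. ((t^2 - 1) / 4) ^ r * t ^ (n - 2*r)
        / (fact r * pochhammer (of_nat m + 1/2) r * fact (n - 2*r)))"
  unfolding gegenbauer_generating_function[symmetric]
    gegenbauer_generating_function_completed_square sum_distrib_left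
  by (rule sum.cong[OF refl], rule gchoose_pochhammer_eq_completed_square_term) auto

lemma fib_denominator_eq_gegenbauer_denominator_compose:
  "1 - fps_X - fps_X^2
     = (1 - fps_const (2 * (\<i>/2)) * fps_X + fps_X^2) oo (fps_const (-\<i>) * fps_X)"
proof (rule fps_ext)
  fix k
  show "(1 - fps_X - fps_X^2 :: complex fps) $ k
      = ((1 - fps_const (2 * (\<i>/2)) * fps_X + fps_X^2) oo (fps_const (-\<i>) * fps_X)) $ k"
    by (cases "k = 2") (auto simp: power2_eq_square)
qed

lemma fps_fib_power_nth_eq_gegenbauer:
  "(fps_fib ^ m :: complex fps) $ (n + m) = (-\<i>) ^ n * gegenbauer n (of_nat m) (\<i>/2)"
proof -
  let ?P = "1 - fps_const (2 * (\<i>/2)) * fps_X + fps_X^2 :: complex fps"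
  let ?L = "fps_const (-\<i>) * fps_X"
  have "inverse ((1 - fps_X - fps_X^2) ^ m) = inverse (?P ^ m oo ?L)"
    unfolding fib_denominator_eq_gegenbauer_denominator_compose by (simp add: fps_compose_power)
  also have "\<dots> = inverse (?P ^ m) oo ?L"
    by (simp add: fps_inverse_compose fps_nth_power_0)
  finally have "(fps_fib ^ m :: complex fps) $ (n + m) = (inverse (?P ^ m) oo ?L) $ n"
    by (simp only: fps_fib_power_nth)
  also have "\<dots> = (-\<i>) ^ n * gegenbauer n (of_nat m) (\<i>/2)"
    by (simp only: fps_nth_compose_linear gegenbauer_generating_function)
  finally show ?thesis .
qed

lemma minus_imag_power_times_gegenbauer_term_at_half_imag:
  assumes "2 * r \<le> n"
  shows "(-\<i>) ^ n * ((((\<i>/2)^2 - 1) / 4) ^ r * (\<i>/2) ^ (n - 2*r)) = (5/4) ^ r / 2 ^ n"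
proof -
  obtain j where n: "n = 2 * r + j" using assms le_Suc_ex by blast
  have "(((\<i>/2)^2 - 1) / 4 :: complex) = - ((5/4) / 4)"
    by (simp add: power2_eq_square)
  then have "(-\<i>) ^ n * ((((\<i>/2)^2 - 1) / 4) ^ r * (\<i>/2) ^ (n - 2*r))
      = ((-1) ^ r * (- ((5/4) / 4)) ^ r) * ((-\<i>) ^ j * (\<i>/2) ^ j)"
    by (simp add: n power_add power_mult)
  also have "\<dots> = (5/4) ^ r / 4 ^ r * (1 / 2 ^ j)"
    by (simp add: power_divide flip: power_mult_distrib)
  also have "\<dots> = (5/4) ^ r / 2 ^ n"
    by (simp add: n power_add power_mult)
  finally show ?thesis .
qed

theorem mainTheorem7:
  fixes m n :: nat
  assumes "m \<ge> 1"
  shows "of_nat (fib_conv_sum m (n + m)) = (-\<i>)^n * gegenbauer n (of_nat m) (\<i>/2)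
       \<and> (-\<i>)^n * gegenbauer n (of_nat m) (\<i>/2)
         = pochhammer (2 * of_nat m) n / 2^n *
           (\<Sum>r=0..n div 2. (5/4)^r / (fact r * pochhammer (of_nat m + 1/2) r * fact (n - 2*r)))"
proof
  show "of_nat (fib_conv_sum m (n + m)) = (-\<i>)^n * gegenbauer n (of_nat m) (\<i>/2)"
    by (simp only: fib_conv_sum_eq_fps_fib_power_nth fps_fib_power_nth_eq_gegenbauer)
  have "(-\<i>)^n * gegenbauer n (of_nat m) (\<i>/2) = pochhammer (2 * of_nat m) n *
      (\<Sum>r=0..n div 2. (-\<i>) ^ n * ((((\<i>/2)^2 - 1) / 4) ^ r * (\<i>/2) ^ (n - 2*r))
         / (fact r * pochhammer (of_nat m + 1/2) r * fact (n - 2*r)))"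
    by (simp add: gegenbauer_of_nat_eq_sum_pochhammer sum_distrib_left ac_simps)
  also have "\<dots> = pochhammer (2 * of_nat m) n *
      (\<Sum>r=0..n div 2. (5/4)^r / 2^n / (fact r * pochhammer (of_nat m + 1/2) r * fact (n - 2*r)))"
    by (intro arg_cong2[where f = "(*)"] sum.cong refl)
      (simp add: minus_imag_power_times_gegenbauer_term_at_half_imag)
  finally show "(-\<i>)^n * gegenbauer n (of_nat m) (\<i>/2)
         = pochhammer (2 * of_nat m) n / 2^n *
           (\<Sum>r=0..n div 2. (5/4)^r / (fact r * pochhammer (of_nat m + 1/2) r * fact (n - 2*r)))"
    by (simp add: sum_distrib_left sum_divide_distrib field_simps)
qed

end
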